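(* For every simulation budget $T>0$, the function $w\mapsto \mathrm{APCS}(w)$ is concave on the open orthant $\{w=(w_1,\dots,w_k)\in\mathbb{R}^k : w_i>0 \text{ for all } i\in\mathcal{K}\}$. Consequently, maximizing $\mathrm{APCS}(w)$ subject to $\sum_{i\in\mathcal{K}} w_i=1$, $w_i> 0$ ($i\in\mathcal{K}$) is a convex optimization problem.
   Context: Let $k\ge 2$ and $\mathcal{K}=\{1,\dots,k\}$. For each $i\in\mathcal{K}$ fix real numbers $\mu_i$ and $\sigma_i>0$. Let $b\in\mathcal{K}$ be the unique index with $\mu_b<\mu_i$ for all $i\neq b$, and let $\mathcal{K}'=\mathcal{K}\setminus\{b\}$. Fix $T>0$. For $i\in\mathcal{K}'$ put $\delta_{i,b}=\mu_i-\mu_b>0$. For $w$ with all $w_i>0$ define $\sigma_{i,b}(w)=\sqrt{\sigma_i^2/(w_iT)+\sigma_b^2/(w_bT)}$ and $$\mathrm{APCS}(w)=1-\sum_{i\in\mathcal{K}'}\Phi\!\left(-\frac{\delta_{i,b}}{\sigma_{i,b}(w)}\right),$$ where $\Phi$ is the standard normal cumulative distribution function. *)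

theory Defs
  imports "HOL-Analysis.Analysis" "HOL-Probability.Probability"
begin

definition Phi :: "real \<Rightarrow> real" where
  "Phi x = (LINT t:{..x}|lborel. std_normal_density t)"

definition sigma_ib :: "('n::finite \<Rightarrow> real) \<Rightarrow> 'n \<Rightarrow> real \<Rightarrow> real ^ 'n \<Rightarrow> 'n \<Rightarrow> real" where
  "sigma_ib \<sigma> b T w i = sqrt ((\<sigma> i)\<^sup>2 / (w $ i * T) + (\<sigma> b)\<^sup>2 / (w $ b * T))"

definition APCS :: "('n::finite \<Rightarrow> real) \<Rightarrow> ('n \<Rightarrow> real) \<Rightarrow> 'n \<Rightarrow> real \<Rightarrow> real ^ 'n \<Rightarrow> real" where
  "APCS \<mu> \<sigma> b T w = 1 - (\<Sum>i\<in>UNIV - {b}. Phi (- ((\<mu> i - \<mu> b) / sigma_ib \<sigma> b T w i)))"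

end

theory Submission
  imports Defs
begin

text \<open>\<open>APCS(w) = 1 - \<Sum>\<^sub>i \<Phi>(-\<delta> h(w))\<close> with \<open>\<delta> \<ge> 0\<close> and \<open>h(w) = 1/\<sigma>\<^sub>i\<^sub>,\<^sub>b(w) \<ge> 0\<close>. Since
  \<open>1/\<sigma>\<^sub>i\<^sub>,\<^sub>b(w)\<^sup>2 = 1/(a/w\<^sub>i + c/w\<^sub>b)\<close> is a weighted harmonic mean, it is concave, and so is its
  square root; hence \<open>-\<delta> h\<close> is convex and nonpositive. On \<open>(-\<infinity>,0]\<close> the normal cdf \<open>\<Phi>\<close> is
  nondecreasing and convex (its derivative, the normal density, increases there), so each summand
  is convex and \<open>APCS\<close> is concave.\<close>

lemma Phi_eq_interval_integral: "Phi u = (LBINT y=-\<infinity>..ereal u. std_normal_density y)"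
  unfolding Phi_def interval_lebesgue_integral_def
  by (auto intro!: set_integral_discrete_difference[where X="{u}"])

lemma Phi_split_at_0:
  "Phi u = (LBINT y=-\<infinity>..ereal 0. std_normal_density y) + (LBINT y=ereal 0..ereal u. std_normal_density y)"
  unfolding Phi_eq_interval_integral
  apply (subst interval_integral_sum[symmetric, where b="ereal 0"])
  apply (auto simp: interval_lebesgue_integrable_def set_integrable_def)
  using integrable_mult_indicator[OF borel_einterval[unfolded sets_lborel[symmetric]] integrable_normal_density]
  by auto

lemma Phi_has_real_derivative: "(Phi has_real_derivative std_normal_density x) (at x)"
proof -
  define r where "r = \<bar>x\<bar> + 1"
  have "continuous_on {-r..r} std_normal_density"
    unfolding std_normal_density_def by (intro continuous_intros) auto
  then have "((\<lambda>u. LBINT y=ereal 0..ereal u. std_normal_density y) has_vector_derivative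
      std_normal_density x) (at x within {-r..r})"
    by (rule interval_integral_FTC2[rotated 2]) (auto simp: r_def)
  then have "((\<lambda>u. LBINT y=ereal 0..ereal u. std_normal_density y) has_real_derivative
      std_normal_density x) (at x)"
    by (subst (asm) at_within_interior[where x=x])
       (auto simp: r_def has_real_derivative_iff_has_vector_derivative)
  then show ?thesis
    unfolding Phi_split_at_0[abs_def] by (auto intro!: derivative_eq_intros)
qed

lemma mono_Phi: "mono Phi"
  by (intro monoI DERIV_nonneg_imp_nondecreasing[where f=Phi]) (auto intro: Phi_has_real_derivative)

lemma convex_on_Phi_nonpos: "convex_on {..0} Phi"
proof (rule convex_on_realI[where f'=std_normal_density])
  show "(Phi has_real_derivative std_normal_density x) (at x)" for x
    by (rule Phi_has_real_derivative)
  fix x y :: real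
  assume "x \<in> {..0}" "x \<le> y" "y \<in> {..0}"
  then have "y\<^sup>2 \<le> x\<^sup>2"
    by (metis atMost_iff abs_of_nonpos abs_le_square_iff neg_le_iff_le)
  then show "std_normal_density x \<le> std_normal_density y"
    unfolding std_normal_density_def by (auto intro!: mult_left_mono divide_right_mono)
qed simp

lemma convex_on_compose_mono:
  assumes g: "convex_on S g" and f: "convex_on I f" "mono_on I f" and "g ` S \<subseteq> I"
  shows "convex_on S (\<lambda>x. f (g x))"
  unfolding convex_on_def
proof (intro conjI ballI allI impI)
  show "convex S" using g by (rule convex_on_imp_convex)
  fix x y and u v :: real
  assume xy: "x \<in> S" "y \<in> S" and uv: "0 \<le> u" "0 \<le> v" "u + v = 1"
  have I: "g (u *\<^sub>R x + v *\<^sub>R y) \<in> I" "g x \<in> I" "g y \<in> I"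
    using \<open>g ` S \<subseteq> I\<close> \<open>convex S\<close> xy uv by (auto simp: convex_def)
  moreover have "u *\<^sub>R g x + v *\<^sub>R g y \<in> I"
    using convex_on_imp_convex[OF f(1)] I uv by (simp add: convex_def)
  ultimately have "f (g (u *\<^sub>R x + v *\<^sub>R y)) \<le> f (u *\<^sub>R g x + v *\<^sub>R g y)"
    using g xy uv by (intro mono_onD[OF f(2)]) (auto simp: convex_on_def)
  also have "\<dots> \<le> u * f (g x) + v * f (g y)"
    using f(1) I uv by (auto simp: convex_on_def)
  finally show "f (g (u *\<^sub>R x + v *\<^sub>R y)) \<le> u * f (g x) + v * f (g y)" .
qed

lemma concave_on_compose_mono:
  assumes g: "concave_on S g" and f: "concave_on I f" "mono_on I f" and "g ` S \<subseteq> I"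
  shows "concave_on S (\<lambda>x. f (g x))"
  unfolding concave_on_iff
proof (intro conjI ballI allI impI)
  show "convex S" using g by (rule concave_on_imp_convex)
  fix x y and u v :: real
  assume xy: "x \<in> S" "y \<in> S" and uv: "0 \<le> u" "0 \<le> v" "u + v = 1"
  have I: "g (u *\<^sub>R x + v *\<^sub>R y) \<in> I" "g x \<in> I" "g y \<in> I"
    using \<open>g ` S \<subseteq> I\<close> \<open>convex S\<close> xy uv by (auto simp: convex_def)
  moreover have "u *\<^sub>R g x + v *\<^sub>R g y \<in> I"
    using concave_on_imp_convex[OF f(1)] I uv by (simp add: convex_def)
  ultimately have "f (u *\<^sub>R g x + v *\<^sub>R g y) \<le> f (g (u *\<^sub>R x + v *\<^sub>R y))"
    using g xy uv by (intro mono_onD[OF f(2)]) (auto simp: concave_on_iff)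
  moreover have "u * f (g x) + v * f (g y) \<le> f (u *\<^sub>R g x + v *\<^sub>R g y)"
    using f(1) I uv by (auto simp: concave_on_iff)
  ultimately show "u * f (g x) + v * f (g y) \<le> f (g (u *\<^sub>R x + v *\<^sub>R y))"
    by linarith
qed

lemma concave_on_compose_linear:
  assumes f: "concave_on T f" and "linear L" "L ` S \<subseteq> T" "convex S"
  shows "concave_on S (\<lambda>x. f (L x))"
  using assms unfolding concave_on_iff
  by (auto simp: linear_add linear_scale image_subset_iff convex_def)

lemma convex_on_sum_fun:
  assumes "finite A" "convex S" "\<And>i. i \<in> A \<Longrightarrow> convex_on S (f i)"
  shows "convex_on S (\<lambda>x. \<Sum>i\<in>A. f i x)"
  using assms by (induction A rule: finite_induct) (auto simp: convex_on_const)

lemma concave_on_sqrt: "concave_on {0..} sqrt"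
  unfolding concave_on_iff
proof (intro conjI ballI allI impI)
  fix p q u v :: real
  assume pq: "p \<in> {0..}" "q \<in> {0..}" and uv: "0 \<le> u" "0 \<le> v" "u + v = 1"
  have v: "v = 1 - u" using uv by simp
  have "u * p + v * q - (u * sqrt p + v * sqrt q)\<^sup>2 = u * v * (sqrt p - sqrt q)\<^sup>2"
    using pq unfolding v by (simp add: power2_eq_square algebra_simps)
  also have "\<dots> \<ge> 0" using uv by simp
  finally show "u * sqrt p + v * sqrt q \<le> sqrt (u *\<^sub>R p + v *\<^sub>R q)"
    by (simp add: real_le_rsqrt)
qed simp

text \<open>The tangent plane of \<open>(u, v) \<mapsto> 1/(a/u + c/v)\<close> at \<open>(x, y)\<close> lies above its graph; the gap
  is \<open>a c (v x - u y)\<^sup>2\<close> up to a positive factor.\<close>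
lemma inverse_sum_divide_le_tangent:
  fixes a c u v x y :: real
  assumes "a > 0" "c > 0" "u > 0" "v > 0" "x > 0" "y > 0"
  shows "1 / (a/u + c/v) \<le> (a * u / x\<^sup>2 + c * v / y\<^sup>2) / (a/x + c/y)\<^sup>2"
proof -
  have "(a/u + c/v) * (a * u / x\<^sup>2 + c * v / y\<^sup>2) - (a/x + c/y)\<^sup>2
      = a * c * (v * x - u * y)\<^sup>2 / (u * v * x\<^sup>2 * y\<^sup>2)"
    using assms by (simp add: field_simps power2_eq_square)
  also have "\<dots> \<ge> 0" using assms by simp
  finally have "(a/x + c/y)\<^sup>2 \<le> (a/u + c/v) * (a * u / x\<^sup>2 + c * v / y\<^sup>2)" by simp
  moreover have "a/x + c/y > 0" "a/u + c/v > 0" using assms by (simp_all add: add_pos_pos)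
  ultimately show ?thesis by (simp add: field_simps)
qed

lemma concave_on_inverse_sum_divide:
  fixes a c :: real
  assumes "a > 0" "c > 0"
  shows "concave_on ({0<..} \<times> {0<..}) (\<lambda>(x, y). 1 / (a/x + c/y))"
  unfolding concave_on_iff
proof (intro conjI ballI allI impI)
  show "convex ({0<..} \<times> {0<..} :: (real \<times> real) set)" by (intro convex_Times) auto
  fix p1 p2 :: "real \<times> real" and u v :: real
  assume p: "p1 \<in> {0<..} \<times> {0<..}" "p2 \<in> {0<..} \<times> {0<..}" and uv: "0 \<le> u" "0 \<le> v" "u + v = 1"
  obtain x1 y1 x2 y2 where p12: "p1 = (x1, y1)" "p2 = (x2, y2)" and pos: "x1 > 0" "y1 > 0" "x2 > 0" "y2 > 0"
    using p by auto
  define x where "x = u * x1 + v * x2"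
  define y where "y = u * y1 + v * y2"
  define D where "D = a/x + c/y"
  have "x > 0" "y > 0"
    unfolding x_def y_def using pos uv by (cases "u = 0"; auto intro: add_pos_nonneg)+
  then have "D > 0" unfolding D_def using assms by (simp add: add_pos_pos)
  have "u * (1 / (a/x1 + c/y1)) + v * (1 / (a/x2 + c/y2))
      \<le> u * ((a * x1 / x\<^sup>2 + c * y1 / y\<^sup>2) / D\<^sup>2) + v * ((a * x2 / x\<^sup>2 + c * y2 / y\<^sup>2) / D\<^sup>2)"
    unfolding D_def using assms pos uv \<open>x > 0\<close> \<open>y > 0\<close>
    by (intro add_mono mult_left_mono inverse_sum_divide_le_tangent) auto
  also have "\<dots> = (a * (u * x1 + v * x2) / x\<^sup>2 + c * (u * y1 + v * y2) / y\<^sup>2) / D\<^sup>2"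
    using \<open>x > 0\<close> \<open>y > 0\<close> \<open>D > 0\<close> by (simp add: field_simps power2_eq_square)
  also have "\<dots> = (a * x / x\<^sup>2 + c * y / y\<^sup>2) / D\<^sup>2"
    by (simp add: x_def y_def)
  also have "\<dots> = 1 / D"
    using \<open>x > 0\<close> \<open>y > 0\<close> \<open>D > 0\<close> unfolding D_def by (simp add: power2_eq_square)
  finally show "u * (case p1 of (x, y) \<Rightarrow> 1 / (a/x + c/y)) + v * (case p2 of (x, y) \<Rightarrow> 1 / (a/x + c/y))
      \<le> (case u *\<^sub>R p1 + v *\<^sub>R p2 of (x, y) \<Rightarrow> 1 / (a/x + c/y))"
    by (simp add: p12 D_def x_def y_def)
qed

lemma convex_on_Phi_neg_mult:
  assumes h: "concave_on S h" "\<And>x. x \<in> S \<Longrightarrow> 0 \<le> h x" and "0 \<le> \<delta>"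
  shows "convex_on S (\<lambda>x. Phi (- (\<delta> * h x)))"
proof (rule convex_on_compose_mono[OF _ convex_on_Phi_nonpos])
  show "convex_on S (\<lambda>x. - (\<delta> * h x))"
    using concave_on_cmul[OF \<open>0 \<le> \<delta>\<close> h(1)] by (simp add: concave_on_def)
  show "mono_on {..0} Phi" using mono_Phi by (simp add: mono_on_def monoD)
  show "(\<lambda>x. - (\<delta> * h x)) ` S \<subseteq> {..0}" using h(2) \<open>0 \<le> \<delta>\<close> by auto
qed

lemma convex_positive_orthant_open_cart: "convex {x :: real ^ 'n. \<forall>i. 0 < x $ i}"
  by (rule convex_box_cart) (simp flip: greaterThan_def)

lemma inverse_sigma_ib_eq:
  "1 / sigma_ib \<sigma> b T w i = sqrt (1 / ((\<sigma> i)\<^sup>2 / T / w $ i + (\<sigma> b)\<^sup>2 / T / w $ b))"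
  by (simp add: sigma_ib_def real_sqrt_divide divide_divide_eq_left mult.commute)

lemma concave_on_inverse_sigma_ib:
  fixes \<sigma> :: "'n::finite \<Rightarrow> real"
  assumes "\<sigma> i > 0" "\<sigma> b > 0" "T > 0"
  shows "concave_on {w. \<forall>j. 0 < w $ j} (\<lambda>w. 1 / sigma_ib \<sigma> b T w i)"
proof -
  define a where "a = (\<sigma> i)\<^sup>2 / T"
  define c where "c = (\<sigma> b)\<^sup>2 / T"
  have "a > 0" "c > 0" unfolding a_def c_def using assms by simp_all
  have "(\<lambda>(x, y). 1 / (a/x + c/y)) ` ({0<..} \<times> {0<..}) \<subseteq> {0..}"
    using \<open>a > 0\<close> \<open>c > 0\<close> by (auto simp: less_imp_le)
  then have "concave_on ({0<..} \<times> {0<..}) (\<lambda>p. sqrt ((\<lambda>(x, y). 1 / (a/x + c/y)) p))"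
    using \<open>a > 0\<close> \<open>c > 0\<close>
    by (intro concave_on_compose_mono[OF concave_on_inverse_sum_divide concave_on_sqrt])
       (simp_all add: mono_on_def)
  moreover have "linear (\<lambda>w :: real ^ 'n. (w $ i, w $ b))"
    by (intro linearI) auto
  moreover have "(\<lambda>w. (w $ i, w $ b)) ` {w. \<forall>j. 0 < w $ j} \<subseteq> {0<..} \<times> {0<..}"
    by auto
  ultimately have "concave_on {w. \<forall>j. 0 < w $ j} (\<lambda>w. sqrt ((\<lambda>(x, y). 1 / (a/x + c/y)) (w $ i, w $ b)))"
    using convex_positive_orthant_open_cart by (rule concave_on_compose_linear)
  then show ?thesis
    unfolding inverse_sigma_ib_eq a_def c_def by simp
qed

lemma concave_on_APCS:
  fixes \<mu> \<sigma> :: "'n::finite \<Rightarrow> real"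
  assumes "\<And>i. \<sigma> i > 0" "\<And>i. i \<noteq> b \<Longrightarrow> \<mu> b \<le> \<mu> i" "T > 0"
  shows "concave_on {w. \<forall>i. 0 < w $ i} (APCS \<mu> \<sigma> b T)"
proof -
  have "convex_on {w. \<forall>i. 0 < w $ i} (\<lambda>w. Phi (- ((\<mu> i - \<mu> b) * (1 / sigma_ib \<sigma> b T w i))))"
    if "i \<in> UNIV - {b}" for i
  proof (rule convex_on_Phi_neg_mult[OF concave_on_inverse_sigma_ib])
    fix w :: "real ^ 'n"
    assume "w \<in> {w. \<forall>i. 0 < w $ i}"
    then have "0 < w $ i" "0 < w $ b" by auto
    then show "0 \<le> 1 / sigma_ib \<sigma> b T w i"
      using \<open>T > 0\<close> by (simp add: sigma_ib_def add_nonneg_nonneg)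
  qed (use assms that in auto)
  then have "convex_on {w. \<forall>i. 0 < w $ i}
      (\<lambda>w. \<Sum>i\<in>UNIV - {b}. Phi (- ((\<mu> i - \<mu> b) / sigma_ib \<sigma> b T w i)))"
    by (intro convex_on_sum_fun convex_positive_orthant_open_cart) simp_all
  then show ?thesis
    unfolding APCS_def[abs_def]
    by (intro concave_on_diff concave_on_const[THEN iffD2] convex_positive_orthant_open_cart)
qed

theorem lemma1:
  fixes \<mu> \<sigma> :: "'n::finite \<Rightarrow> real" and b :: 'n and T :: real
  assumes "CARD('n) \<ge> 2"
    and "\<And>i. \<sigma> i > 0"
    and "\<And>i. i \<noteq> b \<Longrightarrow> \<mu> b < \<mu> i"
    and "T > 0"
  shows "concave_on {w :: real ^ 'n. \<forall>i. w $ i > 0} (APCS \<mu> \<sigma> b T)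
       \<and> convex {w :: real ^ 'n. (\<Sum>i\<in>UNIV. w $ i) = 1 \<and> (\<forall>i. w $ i > 0)}
       \<and> concave_on {w :: real ^ 'n. (\<Sum>i\<in>UNIV. w $ i) = 1 \<and> (\<forall>i. w $ i > 0)} (APCS \<mu> \<sigma> b T)"
proof -
  have concave: "concave_on {w. \<forall>i. 0 < w $ i} (APCS \<mu> \<sigma> b T)"
    using assms by (intro concave_on_APCS) (auto intro: less_imp_le)
  have "convex {w :: real ^ 'n. (\<Sum>i\<in>UNIV. w $ i) = 1}"
    by (auto simp: convex_def sum.distrib simp flip: sum_distrib_left)
  then have simplex: "convex {w :: real ^ 'n. (\<Sum>i\<in>UNIV. w $ i) = 1 \<and> (\<forall>i. w $ i > 0)}"
    using convex_Int[OF _ convex_positive_orthant_open_cart] by (simp add: Collect_conj_eq)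
  have "concave_on {w :: real ^ 'n. (\<Sum>i\<in>UNIV. w $ i) = 1 \<and> (\<forall>i. w $ i > 0)} (APCS \<mu> \<sigma> b T)"
    using concave simplex unfolding concave_on_def by (auto intro: convex_on_subset)
  with concave simplex show ?thesis by simp
qed

end
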